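(* Let $C\subset\mathbb{R}^d$ be a nonempty closed convex set, let $f(x)=\mathbb{E}_\xi[f(x,\xi)]$ where each $f(\cdot,\xi)$ is convex and $G$-Lipschitz on $\mathbb{R}^d$, and let $x_*\in\arg\min_{x\in C}f(x)$. Let $x_{k-1},z_k\in\mathbb{R}^d$, $0<c_k\le1$, $\eta_k>0$, a sample $\xi_k$, and set $$x_k=(1-c_k)x_{k-1}+c_kz_k,\qquad z_{k+1}=\Pi_C\big(z_k-\eta_k\nabla f(x_k,\xi_k)\big),$$ where $\nabla f(x_k,\xi_k)$ is a subgradient of $f(\cdot,\xi_k)$ at $x_k$. Then $$\|z_{k+1}-x_*\|^2\le\|z_k-x_*\|^2+\eta_k^2G^2-\frac{2}{c_k}\eta_k\left[f(x_k,\xi_k)-f(x_*,\xi_k)\right]+2\left(\frac{1}{c_k}-1\right)\eta_k\left[f(x_{k-1},\xi_k)-f(x_*,\xi_k)\right].$$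
   Context: $\Pi_C$ is the Euclidean projection onto $C$. $G$-Lipschitz means $|f(x,\xi)-f(y,\xi)|\le G\|x-y\|$ for all $x,y$. *)

theory Defs
  imports "HOL-Analysis.Analysis" "HOL-Probability.Probability"
begin

definition is_subgradient :: "('a::real_inner \<Rightarrow> real) \<Rightarrow> 'a \<Rightarrow> 'a \<Rightarrow> bool" where
  "is_subgradient h x g \<longleftrightarrow> (\<forall>y. h y \<ge> h x + inner g (y - x))"

end

theory Submission
  imports Defs
begin

text \<open>The inequality is deterministic: it holds for the fixed sample \<open>\<xi>\<close> and any point
  \<open>xstar \<in> C\<close>.
  Projection onto \<open>C\<close> is nonexpansive and fixes \<open>xstar\<close>, so expanding the square of the
  unprojected step bounds \<open>\<parallel>znext - xstar\<parallel>\<^sup>2\<close> by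
  \<open>\<parallel>z - xstar\<parallel>\<^sup>2 - 2\<eta>\<langle>g, z - xstar\<rangle> + \<eta>\<^sup>2\<parallel>g\<parallel>\<^sup>2\<close>, and \<open>\<parallel>g\<parallel> \<le> G\<close> by Lipschitz continuity.
  Since \<open>c (z - xstar) = c (x - xstar) + (1 - c) (x - xprev)\<close>, the subgradient inequality at
  \<open>x\<close> applied towards \<open>xstar\<close> and towards \<open>xprev\<close> bounds \<open>c\<langle>g, z - xstar\<rangle>\<close> from below by
  \<open>f(x) - f(xstar) - (1 - c)(f(xprev) - f(xstar))\<close>.\<close>

lemma subgradient_norm_le_lipschitz:
  fixes h :: "'a::real_inner \<Rightarrow> real"
  assumes "is_subgradient h x g" and "G-lipschitz_on UNIV h"
  shows "norm g \<le> G"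
proof -
  have "(norm g)\<^sup>2 \<le> h (x + g) - h x"
    using assms(1)[unfolded is_subgradient_def, rule_format, of "x + g"]
    by (simp add: dot_square_norm)
  also have "\<dots> \<le> G * norm g"
    using lipschitz_onD[OF assms(2), of "x + g" x] by (simp add: dist_norm)
  finally have "norm g * norm g \<le> G * norm g"
    by (simp add: power2_eq_square)
  then show ?thesis
    using lipschitz_on_nonneg[OF assms(2)] by (cases "g = 0") auto
qed

lemma closest_point_step_norm_le:
  fixes C :: "'a::euclidean_space set"
  assumes "convex C" "closed C" "C \<noteq> {}" "p \<in> C"
  shows "(norm (closest_point C (z - \<eta> *\<^sub>R g) - p))\<^sup>2
           \<le> (norm (z - p))\<^sup>2 - 2 * \<eta> * inner g (z - p) + \<eta>\<^sup>2 * (norm g)\<^sup>2"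
proof -
  have "norm (closest_point C (z - \<eta> *\<^sub>R g) - p) \<le> norm ((z - p) - \<eta> *\<^sub>R g)"
    using closest_point_lipschitz[OF assms(1-3), of "z - \<eta> *\<^sub>R g" p]
      closest_point_self[OF assms(4)]
    by (simp add: dist_norm algebra_simps)
  then have "(norm (closest_point C (z - \<eta> *\<^sub>R g) - p))\<^sup>2 \<le> (norm ((z - p) - \<eta> *\<^sub>R g))\<^sup>2"
    by (simp add: power_mono)
  also have "\<dots> = (norm (z - p))\<^sup>2 - 2 * \<eta> * inner g (z - p) + \<eta>\<^sup>2 * (norm g)\<^sup>2"
    unfolding power2_norm_eq_inner
    by (simp add: inner_diff_left inner_diff_right inner_commute power2_eq_square algebra_simps)
  finally show ?thesis .
qed

lemma subgradient_inner_convex_combination_ge: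
  fixes h :: "'a::real_inner \<Rightarrow> real"
  assumes "is_subgradient h x g" and "0 \<le> c" "c \<le> 1"
    and "x = (1 - c) *\<^sub>R x' + c *\<^sub>R z"
  shows "c * inner g (z - p) \<ge> (h x - h p) - (1 - c) * (h x' - h p)"
proof -
  have "c *\<^sub>R (z - p) = c *\<^sub>R (x - p) + (1 - c) *\<^sub>R (x - x')"
    using assms(4) by (simp add: algebra_simps)
  then have "c * inner g (z - p) = c * inner g (x - p) + (1 - c) * inner g (x - x')"
    by (metis inner_add_right inner_scaleR_right)
  moreover have "inner g (x - y) \<ge> h x - h y" for y
    using assms(1)[unfolded is_subgradient_def, rule_format, of y] by (simp add: inner_diff_right)
  ultimately have "c * inner g (z - p) \<ge> c * (h x - h p) + (1 - c) * (h x - h x')"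
    using assms(2,3) by (smt (verit) mult_left_mono)
  then show ?thesis
    by (simp add: algebra_simps)
qed

theorem theorem15:
  fixes M :: "'s measure"
    and F :: "'a::euclidean_space \<Rightarrow> 's \<Rightarrow> real"
    and C :: "'a set"
    and G c \<eta> :: real
    and xstar xprev z x znext g :: 'a
    and \<xi> :: 's
  assumes "prob_space M"
    and "C \<noteq> {}" and "closed C" and "convex C"
    and "\<And>s. s \<in> space M \<Longrightarrow> convex_on UNIV (\<lambda>y. F y s)"
    and "\<And>s. s \<in> space M \<Longrightarrow> G-lipschitz_on UNIV (\<lambda>y. F y s)"
    and "\<And>y. integrable M (F y)"
    and "xstar \<in> C"
    and "\<And>y. y \<in> C \<Longrightarrow> prob_space.expectation M (F xstar) \<le> prob_space.expectation M (F y)"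
    and "0 < c" and "c \<le> 1" and "\<eta> > 0"
    and "\<xi> \<in> space M"
    and "x = (1 - c) *\<^sub>R xprev + c *\<^sub>R z"
    and "is_subgradient (\<lambda>y. F y \<xi>) x g"
    and "znext = closest_point C (z - \<eta> *\<^sub>R g)"
  shows "(norm (znext - xstar))\<^sup>2 \<le> (norm (z - xstar))\<^sup>2 + \<eta>\<^sup>2 * G\<^sup>2
           - (2 / c) * \<eta> * (F x \<xi> - F xstar \<xi>)
           + 2 * (1 / c - 1) * \<eta> * (F xprev \<xi> - F xstar \<xi>)"
proof -
  have "norm g \<le> G"
    using subgradient_norm_le_lipschitz assms(6,13,15) by blast
  then have "\<eta>\<^sup>2 * (norm g)\<^sup>2 \<le> \<eta>\<^sup>2 * G\<^sup>2"
    by (simp add: mult_left_mono power_mono)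
  then have step: "(norm (znext - xstar))\<^sup>2 \<le> (norm (z - xstar))\<^sup>2 - 2 * \<eta> * inner g (z - xstar) + \<eta>\<^sup>2 * G\<^sup>2"
    using closest_point_step_norm_le[OF assms(4,3,2,8), of z \<eta> g] unfolding assms(16) by linarith
  have "c * inner g (z - xstar) \<ge> (F x \<xi> - F xstar \<xi>) - (1 - c) * (F xprev \<xi> - F xstar \<xi>)"
    using subgradient_inner_convex_combination_ge[OF assms(15)] assms(10,11,14) by simp
  then have "(2 * \<eta> / c) * (c * inner g (z - xstar))
      \<ge> (2 * \<eta> / c) * ((F x \<xi> - F xstar \<xi>) - (1 - c) * (F xprev \<xi> - F xstar \<xi>))"
    using assms(10,12) by (intro mult_left_mono) auto
  moreover have "(2 * \<eta> / c) * (c * inner g (z - xstar)) = 2 * \<eta> * inner g (z - xstar)"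
    using assms(10) by simp
  moreover have "(2 * \<eta> / c) * ((F x \<xi> - F xstar \<xi>) - (1 - c) * (F xprev \<xi> - F xstar \<xi>))
      = (2 / c) * \<eta> * (F x \<xi> - F xstar \<xi>) - 2 * (1 / c - 1) * \<eta> * (F xprev \<xi> - F xstar \<xi>)"
    using assms(10) by (simp add: field_simps)
  ultimately show ?thesis
    using step by linarith
qed

end
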